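(* For any tile sets $\mathcal{T},\mathcal{U},\mathcal{B}$ with mutually consistent frequencies, $d(\mathcal{T},\mathcal{U};\mathcal{B})\le 2$. If moreover $\mathcal{T},\mathcal{U},\mathcal{B}$ consist only of exact tiles, then $d(\mathcal{T},\mathcal{U};\mathcal{B})\le 1$.
   Context: Fix $n,m\ge1$; $\mathcal{D}$ is the set of $n\times m$ binary matrices. A tile is $T=(t(T),a(T))$ with nonempty $t(T)\subseteq\{1..n\}$, $a(T)\subseteq\{1..m\}$, $\mathrm{area}(T)=t(T)\times a(T)$. $\mathrm{fr}(T;D)=\frac1{|\mathrm{area}(T)|}\sum_{(i,j)\in\mathrm{area}(T)}D(i,j)$, $\mathrm{fr}(T;p)=\sum_Dp(D)\mathrm{fr}(T;D)$. Each tile carries a target frequency $\alpha_T$; tile sets are consistent if some distribution on $\mathcal{D}$ attains all target frequencies simultaneously. For a tile set $\mathcal{T}$, $p^*_{\mathcal{T}}$ is the entropy-maximising distribution among those with $\mathrm{fr}(T;p)=\alpha_T$ for all $T\in\mathcal{T}$. $\mathrm{KL}(\mathcal{T}\|\mathcal{U})=\mathrm{KL}(p^*_{\mathcal{T}}\|p^*_{\mathcal{U}})$ (natural log). A tile is exact if its frequency is $0$ or $1$. With $\mathcal{M}=\mathcal{T}\cup\mathcal{U}\cup\mathcal{B}$, $d(\mathcal{T},\mathcal{U};\mathcal{B})=\frac{\mathrm{KL}(\mathcal{M}\|\mathcal{U}\cup\mathcal{B})+\mathrm{KL}(\mathcal{M}\|\mathcal{T}\cup\mathcal{B})}{\mathrm{KL}(\mathcal{M}\|\mathcal{B})}$,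 defined as $1$ if $\mathrm{KL}(\mathcal{M}\|\mathcal{B})=0$. *)

theory Defs
  imports "HOL-Analysis.Analysis"
begin

text \<open>A binary n x m matrix D is represented by the set of its 1-entries,
  a subset of {1..n} x {1..m}; so D(i,j) = 1 iff (i,j) is in D.\<close>
type_synonym matrix = "(nat \<times> nat) set"

definition datasets :: "nat \<Rightarrow> nat \<Rightarrow> matrix set" where
  "datasets n m = Pow ({1..n} \<times> {1..m})"

type_synonym tile = "nat set \<times> nat set"

definition tile_ok :: "nat \<Rightarrow> nat \<Rightarrow> tile \<Rightarrow> bool" where
  "tile_ok n m T \<longleftrightarrow> fst T \<noteq> {} \<and> fst T \<subseteq> {1..n} \<and> snd T \<noteq> {} \<and> snd T \<subseteq> {1..m}"

definition area :: "tile \<Rightarrow> (nat \<times> nat) set" where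
  "area T = fst T \<times> snd T"

definition fr_data :: "tile \<Rightarrow> matrix \<Rightarrow> real" where
  "fr_data T D = (1 / real (card (area T))) * (\<Sum>ij\<in>area T. indicator D ij)"

definition is_dist :: "nat \<Rightarrow> nat \<Rightarrow> (matrix \<Rightarrow> real) \<Rightarrow> bool" where
  "is_dist n m p \<longleftrightarrow> (\<forall>D\<in>datasets n m. 0 \<le> p D) \<and> (\<forall>D. D \<notin> datasets n m \<longrightarrow> p D = 0)
      \<and> (\<Sum>D\<in>datasets n m. p D) = 1"

definition fr_dist :: "nat \<Rightarrow> nat \<Rightarrow> tile \<Rightarrow> (matrix \<Rightarrow> real) \<Rightarrow> real" where
  "fr_dist n m T p = (\<Sum>D\<in>datasets n m. p D * fr_data T D)"

definition feasible :: "nat \<Rightarrow> nat \<Rightarrow> (tile \<Rightarrow> real) \<Rightarrow> tile set \<Rightarrow> (matrix \<Rightarrow> real) \<Rightarrow> bool" where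
  "feasible n m \<alpha> TS p \<longleftrightarrow> is_dist n m p \<and> (\<forall>T\<in>TS. fr_dist n m T p = \<alpha> T)"

definition consistent :: "nat \<Rightarrow> nat \<Rightarrow> (tile \<Rightarrow> real) \<Rightarrow> tile set \<Rightarrow> bool" where
  "consistent n m \<alpha> TS \<longleftrightarrow> (\<exists>p. feasible n m \<alpha> TS p)"

text \<open>Shannon entropy (natural log); note 0 * ln 0 = 0 in Isabelle.\<close>
definition entropy :: "nat \<Rightarrow> nat \<Rightarrow> (matrix \<Rightarrow> real) \<Rightarrow> real" where
  "entropy n m p = - (\<Sum>D\<in>datasets n m. p D * ln (p D))"

definition maxent :: "nat \<Rightarrow> nat \<Rightarrow> (tile \<Rightarrow> real) \<Rightarrow> tile set \<Rightarrow> (matrix \<Rightarrow> real)" where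
  "maxent n m \<alpha> TS = (THE p. feasible n m \<alpha> TS p \<and>
      (\<forall>q. feasible n m \<alpha> TS q \<longrightarrow> entropy n m q \<le> entropy n m p))"

text \<open>Kullback-Leibler divergence (natural log); terms with p D = 0 vanish.\<close>
definition KL :: "nat \<Rightarrow> nat \<Rightarrow> (matrix \<Rightarrow> real) \<Rightarrow> (matrix \<Rightarrow> real) \<Rightarrow> real" where
  "KL n m p q = (\<Sum>D\<in>datasets n m. p D * ln (p D / q D))"

definition KL_tiles :: "nat \<Rightarrow> nat \<Rightarrow> (tile \<Rightarrow> real) \<Rightarrow> tile set \<Rightarrow> tile set \<Rightarrow> real" where
  "KL_tiles n m \<alpha> TS US = KL n m (maxent n m \<alpha> TS) (maxent n m \<alpha> US)"

definition dist_d :: "nat \<Rightarrow> nat \<Rightarrow> (tile \<Rightarrow> real) \<Rightarrow> tile set \<Rightarrow> tile set \<Rightarrow> tile set \<Rightarrow> real" where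
  "dist_d n m \<alpha> TS US BS =
     (let MS = TS \<union> US \<union> BS in
      if KL_tiles n m \<alpha> MS BS = 0 then 1
      else (KL_tiles n m \<alpha> MS (US \<union> BS) + KL_tiles n m \<alpha> MS (TS \<union> BS)) / KL_tiles n m \<alpha> MS BS)"

definition exact_tile :: "(tile \<Rightarrow> real) \<Rightarrow> tile \<Rightarrow> bool" where
  "exact_tile \<alpha> T \<longleftrightarrow> \<alpha> T = 0 \<or> \<alpha> T = 1"

end

theory Submission
  imports Defs "HOL-Real_Asymp.Real_Asymp"
begin

text \<open>
  Write \<open>h(Y)\<close> for the entropy of the maximum entropy distribution \<open>p*_Y\<close>. Since the
  feasible distributions form a polytope and \<open>p*_Y\<close> has maximal support in it, the first-order
  condition at \<open>p*_Y\<close> is the orthogonality \<open>\<Sum> q ln p*_Y = \<Sum> p*_Y ln p*_Y\<close> for every feasible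
  \<open>q\<close>. Applied to \<open>q = p*_M\<close> with \<open>Y \<subseteq> M\<close> it gives the Pythagorean identity
  \<open>KL(M\<parallel>Y) = h(Y) - h(M)\<close>, so
  \<open>d = (h(U\<union>B) + h(T\<union>B) - 2h(M)) / (h(B) - h(M))\<close>, and \<open>d \<le> 2\<close> because \<open>h\<close> is antitone.
  For exact tiles the feasible distributions are those supported on the matrices that agree
  with every 0- and 1-tile; the maximum entropy one is uniform there, so \<open>h(Y)\<close> is \<open>ln 2\<close>
  times the number of cells not covered by \<open>Y\<close>. That number is supermodular in \<open>Y\<close>, which
  gives \<open>d \<le> 1\<close>.
\<close>

lemma mult_ln_le_mult_ln_self:
  fixes a b :: real
  assumes "0 \<le> a" "0 \<le> b" "0 < a \<Longrightarrow> 0 < b"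
  shows "a * ln b \<le> a * ln a - a + b"
proof (cases "a = 0")
  case False
  with assms have a: "a > 0" and b: "b > 0" by auto
  have "ln (b / a) \<le> b / a - 1" using a b by (intro ln_le_minus_one) simp
  hence "a * ln (b / a) \<le> a * (b / a - 1)" using a by (simp add: mult_left_mono)
  thus ?thesis using a b by (simp add: ln_div algebra_simps)
qed (use assms in simp)

lemma gibbs_inequality:
  fixes p q :: "'a \<Rightarrow> real"
  assumes "finite A" "\<And>x. x \<in> A \<Longrightarrow> 0 \<le> p x" "\<And>x. x \<in> A \<Longrightarrow> 0 \<le> q x"
    and "\<And>x. x \<in> A \<Longrightarrow> 0 < p x \<Longrightarrow> 0 < q x" and "sum q A \<le> sum p A"
  shows "(\<Sum>x\<in>A. p x * ln (q x)) \<le> (\<Sum>x\<in>A. p x * ln (p x))"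
proof -
  have "(\<Sum>x\<in>A. p x * ln (q x)) \<le> (\<Sum>x\<in>A. p x * ln (p x) - p x + q x)"
    by (intro sum_mono mult_ln_le_mult_ln_self) (use assms in auto)
  also have "\<dots> = (\<Sum>x\<in>A. p x * ln (p x)) - sum p A + sum q A"
    by (simp add: sum.distrib sum_subtractf)
  finally show ?thesis using assms(5) by linarith
qed

lemma neg_sum_mult_ln_le_ln_card:
  fixes q :: "'a \<Rightarrow> real"
  assumes "finite A" "A \<noteq> {}" "\<And>x. x \<in> A \<Longrightarrow> 0 \<le> q x" "sum q A = 1"
  shows "- (\<Sum>x\<in>A. q x * ln (q x)) \<le> ln (card A)"
proof -
  have N: "0 < real (card A)" using assms(1,2) by (simp add: card_gt_0_iff)
  have "(\<Sum>x\<in>A. q x * ln (1 / card A)) \<le> (\<Sum>x\<in>A. q x * ln (q x))"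
    by (rule gibbs_inequality) (use assms N in auto)
  moreover have "(\<Sum>x\<in>A. q x * ln (1 / card A)) = - ln (card A)"
    using assms(4) N by (simp add: ln_div sum_negf sum_distrib_right[symmetric])
  ultimately show ?thesis by linarith
qed

lemma sum_mult_ln_le_single_term:
  fixes q r :: "'a \<Rightarrow> real"
  assumes "finite A" "x0 \<in> A" and q: "\<And>x. x \<in> A \<Longrightarrow> 0 \<le> q x"
    and r: "\<And>x. x \<in> A \<Longrightarrow> 0 < q x \<Longrightarrow> 0 < r x" "\<And>x. x \<in> A \<Longrightarrow> r x \<le> 1"
  shows "(\<Sum>x\<in>A. q x * ln (r x)) \<le> q x0 * ln (r x0)"
proof -
  have "q x * ln (r x) \<le> 0" if x: "x \<in> A" for x
  proof (cases "0 < q x")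
    case True
    thus ?thesis using q[OF x] r[OF x] by (simp add: mult_nonneg_nonpos)
  next
    case False
    hence "q x = 0" using q[OF x] by linarith
    thus ?thesis by simp
  qed
  hence "(\<Sum>x\<in>A - {x0}. q x * ln (r x)) \<le> 0" by (intro sum_nonpos) simp
  thus ?thesis using assms(1,2) by (simp add: sum.remove)
qed

lemma sum_mult_ln_mixture_le:
  fixes p q :: "'a \<Rightarrow> real"
  assumes A: "finite A" and p: "\<And>x. x \<in> A \<Longrightarrow> 0 \<le> p x" and q: "\<And>x. x \<in> A \<Longrightarrow> 0 \<le> q x"
    and sums: "sum p A = 1" "sum q A = 1" and x0: "x0 \<in> A" "p x0 = 0" and t: "0 < t" "t < 1"
  shows "(\<Sum>x\<in>A. (p x + t * (q x - p x)) * ln (p x + t * (q x - p x)))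
           \<le> (1 - t) * (\<Sum>x\<in>A. p x * ln (p x)) + t * (q x0 * ln (t * q x0))"
proof -
  define r where "r x = p x + t * (q x - p x)" for x
  have r_mix: "r x = (1 - t) * p x + t * q x" for x by (simp add: r_def algebra_simps)
  have r_nn: "0 \<le> r x" if "x \<in> A" for x
    unfolding r_mix using t p[OF that] q[OF that] by simp
  have r_pos: "0 < r x" if "x \<in> A" "0 < p x \<or> 0 < q x" for x
    unfolding r_mix using t p[OF that(1)] q[OF that(1)] that(2)
    by (auto intro: add_pos_nonneg add_nonneg_pos)
  have r_sum: "sum r A = 1"
    using sums by (simp add: r_mix sum.distrib sum_distrib_left[symmetric])
  have r_le_1: "r x \<le> 1" if "x \<in> A" for x
    using member_le_sum[of x A r] A that r_nn r_sum by simp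
  have "(\<Sum>x\<in>A. r x * ln (r x))
      = (\<Sum>x\<in>A. (1 - t) * (p x * ln (r x)) + t * (q x * ln (r x)))"
    by (intro sum.cong) (simp_all add: r_mix algebra_simps)
  also have "\<dots> = (1 - t) * (\<Sum>x\<in>A. p x * ln (r x)) + t * (\<Sum>x\<in>A. q x * ln (r x))"
    by (simp only: sum.distrib sum_distrib_left)
  also have "\<dots> \<le> (1 - t) * (\<Sum>x\<in>A. p x * ln (p x)) + t * (q x0 * ln (r x0))"
  proof (intro add_mono mult_left_mono)
    show "(\<Sum>x\<in>A. p x * ln (r x)) \<le> (\<Sum>x\<in>A. p x * ln (p x))"
      by (rule gibbs_inequality[OF A p r_nn]) (use r_sum sums r_pos in auto)
    show "(\<Sum>x\<in>A. q x * ln (r x)) \<le> q x0 * ln (r x0)"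
      by (rule sum_mult_ln_le_single_term[where q = q and r = r, OF A x0(1) q])
         (use r_pos r_le_1 in auto)
  qed (use t in auto)
  finally show ?thesis by (simp add: r_def x0(2))
qed

lemma sum_mult_ln_mixture_lt:
  fixes p q :: "'a \<Rightarrow> real"
  assumes A: "finite A" and p: "\<And>x. x \<in> A \<Longrightarrow> 0 \<le> p x" and q: "\<And>x. x \<in> A \<Longrightarrow> 0 \<le> q x"
    and sums: "sum p A = 1" "sum q A = 1"
    and x0: "x0 \<in> A" "p x0 = 0" "0 < q x0"
  shows "\<exists>t\<in>{0<..<1}. (\<Sum>x\<in>A. (p x + t * (q x - p x)) * ln (p x + t * (q x - p x)))
                       < (\<Sum>x\<in>A. p x * ln (p x))"
proof -
  define c where "c = q x0"
  define S where "S = (\<Sum>x\<in>A. p x * ln (p x))"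
  define t where "t = exp (- (\<bar>S\<bar> + 1) / c)"
  have "q x0 \<le> sum q A" using A x0(1) q by (intro member_le_sum) auto
  hence c: "0 < c" "c \<le> 1" using x0(3) sums by (auto simp: c_def)
  have "- (\<bar>S\<bar> + 1) / c < 0" using c by (intro divide_neg_pos) auto
  hence t: "0 < t" "t < 1" by (auto simp: t_def)
  have "c * ln (t * c) = c * ln t + c * ln c" using t c by (simp add: ln_mult algebra_simps)
  also have "\<dots> \<le> c * ln t" using c by (simp add: mult_nonneg_nonpos)
  also have "c * ln t = - (\<bar>S\<bar> + 1)" using c by (simp add: t_def)
  finally have "c * ln (t * c) \<le> - (\<bar>S\<bar> + 1)" .
  hence "t * (c * ln (t * c)) \<le> t * (- (\<bar>S\<bar> + 1))" using t by (intro mult_left_mono) auto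
  with sum_mult_ln_mixture_le[OF A p q sums x0(1,2) t]
  have "(\<Sum>x\<in>A. (p x + t * (q x - p x)) * ln (p x + t * (q x - p x)))
      \<le> (1 - t) * S + t * (- (\<bar>S\<bar> + 1))"
    unfolding S_def c_def by linarith
  also have "\<dots> < S"
  proof -
    have "0 < t * (S + \<bar>S\<bar> + 1)" using t abs_ge_minus_self[of S] by (intro mult_pos_pos) auto
    thus ?thesis by (auto simp: algebra_simps)
  qed
  finally show ?thesis using t unfolding S_def by auto
qed

lemma affine_extension_nonneg:
  fixes p q :: "'a \<Rightarrow> real"
  assumes "finite A" "\<And>x. x \<in> A \<Longrightarrow> 0 \<le> p x" "\<And>x. x \<in> A \<Longrightarrow> p x = 0 \<Longrightarrow> q x = 0"
  shows "\<exists>e>0. \<forall>s. \<bar>s\<bar> < e \<longrightarrow> (\<forall>x\<in>A. 0 \<le> p x + s * (q x - p x))"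
proof -
  define e where "e = Min (insert 1 ((\<lambda>x. p x / (\<bar>q x - p x\<bar> + 1)) ` {x\<in>A. 0 < p x}))"
  have "0 < e" unfolding e_def using assms(1) by (subst Min_gr_iff) auto
  moreover have "0 \<le> p x + s * (q x - p x)" if s: "\<bar>s\<bar> < e" and x: "x \<in> A" for s x
  proof (cases "p x = 0")
    case False
    hence px: "0 < p x" using assms(2)[OF x] by simp
    have "e \<le> p x / (\<bar>q x - p x\<bar> + 1)" unfolding e_def using assms(1) x px by (intro Min_le) auto
    moreover have d: "0 < \<bar>q x - p x\<bar> + 1" by (simp add: add_nonneg_pos)
    ultimately have "e * (\<bar>q x - p x\<bar> + 1) \<le> p x" by (simp add: pos_le_divide_eq)
    moreover have "\<bar>s\<bar> * (\<bar>q x - p x\<bar> + 1) \<le> e * (\<bar>q x - p x\<bar> + 1)"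
      using s d by (intro mult_right_mono) auto
    moreover have "\<bar>s * (q x - p x)\<bar> \<le> \<bar>s\<bar> * (\<bar>q x - p x\<bar> + 1)"
      by (simp add: abs_mult mult_left_mono)
    ultimately show ?thesis by linarith
  qed (use assms(3)[OF x] in simp)
  ultimately show ?thesis by blast
qed

lemma cross_entropy_eq_at_entropy_max:
  fixes p q :: "'a \<Rightarrow> real"
  assumes "finite A" and p: "\<And>x. x \<in> A \<Longrightarrow> 0 \<le> p x"
    and supp: "\<And>x. x \<in> A \<Longrightarrow> p x = 0 \<Longrightarrow> q x = 0" and sums: "sum q A = sum p A"
    and "0 < e"
    and max: "\<And>s. \<bar>s\<bar> < e \<Longrightarrow> (\<Sum>x\<in>A. p x * ln (p x))
               \<le> (\<Sum>x\<in>A. (p x + s * (q x - p x)) * ln (p x + s * (q x - p x)))"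
  shows "(\<Sum>x\<in>A. q x * ln (p x)) = (\<Sum>x\<in>A. p x * ln (p x))"
proof -
  define g where "g s = (\<Sum>x\<in>A. (p x + s * (q x - p x)) * ln (p x + s * (q x - p x)))" for s
  have "(g has_real_derivative (\<Sum>x\<in>A. (q x - p x) * ln (p x) + (q x - p x))) (at 0)"
    unfolding g_def
  proof (rule DERIV_sum)
    fix x assume x: "x \<in> A"
    show "((\<lambda>s. (p x + s * (q x - p x)) * ln (p x + s * (q x - p x))) has_real_derivative
           (q x - p x) * ln (p x) + (q x - p x)) (at 0)"
    proof (cases "p x = 0")
      case False
      hence "0 < p x" using p[OF x] by simp
      thus ?thesis by (auto intro!: derivative_eq_intros)
    qed (use supp[OF x] in simp)
  qed
  moreover have "\<forall>s. \<bar>0 - s\<bar> < e \<longrightarrow> g 0 \<le> g s" using max by (simp add: g_def)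
  ultimately have "(\<Sum>x\<in>A. (q x - p x) * ln (p x) + (q x - p x)) = 0"
    using DERIV_local_min \<open>0 < e\<close> by blast
  with sums show ?thesis by (simp add: sum.distrib sum_subtractf left_diff_distrib)
qed

lemma eq_if_cross_entropies_eq:
  fixes p q :: "'a \<Rightarrow> real"
  assumes A: "finite A" and nn: "\<And>x. x \<in> A \<Longrightarrow> 0 \<le> p x" "\<And>x. x \<in> A \<Longrightarrow> 0 \<le> q x"
    and supp: "\<And>x. x \<in> A \<Longrightarrow> 0 < p x \<longleftrightarrow> 0 < q x"
    and "(\<Sum>x\<in>A. q x * ln (p x)) = (\<Sum>x\<in>A. p x * ln (p x))"
    and "(\<Sum>x\<in>A. p x * ln (q x)) = (\<Sum>x\<in>A. q x * ln (q x))"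
    and x: "x \<in> A"
  shows "p x = q x"
proof -
  have both_pos: "0 < p y" "0 < q y" if "y \<in> A" "p y \<noteq> q y" for y
    using that nn[OF that(1)] supp[OF that(1)] by linarith+
  have term_nn: "0 \<le> (p y - q y) * (ln (p y) - ln (q y))" if "y \<in> A" for y
  proof (cases "p y = q y")
    case False
    with both_pos[OF that this] show ?thesis
      by (cases "p y \<le> q y") (auto intro: mult_nonpos_nonpos mult_nonneg_nonneg)
  qed simp
  have "(\<Sum>y\<in>A. (p y - q y) * (ln (p y) - ln (q y))) = 0"
    using assms(5,6) by (simp add: algebra_simps sum.distrib sum_subtractf)
  hence "(p x - q x) * (ln (p x) - ln (q x)) = 0"
    using A term_nn x by (subst (asm) sum_nonneg_eq_0_iff) auto
  thus ?thesis using both_pos[OF x] by (cases "p x = q x") auto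
qed

lemma continuous_on_mult_ln: "continuous_on {0..} (\<lambda>x::real. x * ln x)"
proof -
  have "continuous (at x within {0..}) (\<lambda>x::real. x * ln x)" if "x \<ge> 0" for x
  proof (cases "x = 0")
    case True
    have "((\<lambda>x::real. x * ln x) \<longlongrightarrow> 0) (at_right 0)" by real_asymp
    thus ?thesis using True by (simp add: continuous_within at_within_Ici_at_right)
  next
    case False
    hence "isCont (\<lambda>x::real. x * ln x) x" using that by (auto intro!: continuous_intros)
    thus ?thesis using continuous_at_imp_continuous_at_within by blast
  qed
  thus ?thesis using continuous_on_eq_continuous_within by auto
qed

lemma finite_datasets [simp]: "finite (datasets n m)"
  unfolding datasets_def by simp

lemma feasible_nonneg: "feasible n m \<alpha> X p \<Longrightarrow> 0 \<le> p D"
  unfolding feasible_def is_dist_def by (cases "D \<in> datasets n m") auto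

lemma feasible_zero_outside: "feasible n m \<alpha> X p \<Longrightarrow> D \<notin> datasets n m \<Longrightarrow> p D = 0"
  unfolding feasible_def is_dist_def by auto

lemma feasible_sum: "feasible n m \<alpha> X p \<Longrightarrow> (\<Sum>D\<in>datasets n m. p D) = 1"
  unfolding feasible_def is_dist_def by auto

lemma feasible_subset: "X \<subseteq> Y \<Longrightarrow> feasible n m \<alpha> Y p \<Longrightarrow> feasible n m \<alpha> X p"
  unfolding feasible_def by auto

lemma consistent_subset: "X \<subseteq> Y \<Longrightarrow> consistent n m \<alpha> Y \<Longrightarrow> consistent n m \<alpha> X"
  unfolding consistent_def using feasible_subset by blast

lemma feasible_affine:
  assumes "feasible n m \<alpha> X p" "feasible n m \<alpha> X q"
    and "\<And>D. D \<in> datasets n m \<Longrightarrow> 0 \<le> p D + t * (q D - p D)"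
  shows "feasible n m \<alpha> X (\<lambda>D. p D + t * (q D - p D))"
proof -
  have "(\<Sum>D\<in>datasets n m. p D + t * (q D - p D)) = (\<Sum>D\<in>datasets n m. p D)
      + t * ((\<Sum>D\<in>datasets n m. q D) - (\<Sum>D\<in>datasets n m. p D))"
    by (simp only: sum.distrib sum_distrib_left[symmetric] sum_subtractf)
  moreover have "fr_dist n m T (\<lambda>D. p D + t * (q D - p D))
      = fr_dist n m T p + t * (fr_dist n m T q - fr_dist n m T p)" for T
    unfolding fr_dist_def by (simp add: algebra_simps sum.distrib sum_distrib_left sum_subtractf)
  ultimately show ?thesis using assms unfolding feasible_def is_dist_def by auto
qed

lemma compact_feasible: "compact {p. feasible n m \<alpha> X p}"
proof -
  let ?\<Omega> = "datasets n m"
  define S where "S = {p. feasible n m \<alpha> X p}"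
  define K :: "(matrix \<Rightarrow> real) set"
    where "K = PiE UNIV (\<lambda>D. if D \<in> ?\<Omega> then {0..1} else {0})"
  have "compactin (product_topology (\<lambda>_. euclidean) UNIV) K"
    unfolding K_def by (subst compactin_PiE) auto
  hence "compact K" by (simp add: euclidean_product_topology)
  have coord: "continuous_on UNIV (\<lambda>p::matrix \<Rightarrow> real. p D)" for D by simp
  have fr_dist: "continuous_on UNIV (\<lambda>p. fr_dist n m T p)" for T
    unfolding fr_dist_def by (intro continuous_on_sum continuous_on_mult_right coord)
  have "S = (\<Inter>D\<in>?\<Omega>. {p. 0 \<le> p D}) \<inter> (\<Inter>D\<in>-?\<Omega>. {p. p D = 0})
      \<inter> {p. (\<Sum>D\<in>?\<Omega>. p D) = 1} \<inter> (\<Inter>T\<in>X. {p. fr_dist n m T p = \<alpha> T})"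
    unfolding S_def feasible_def is_dist_def by auto
  hence "closed S"
    by (simp only:) (intro closed_Int closed_INT ballI closed_Collect_le closed_Collect_eq coord
        fr_dist continuous_on_const continuous_on_sum)
  hence "compact (K \<inter> S)" by (rule compact_Int_closed[OF \<open>compact K\<close>])
  moreover have "S \<subseteq> K"
  proof
    fix p assume "p \<in> S"
    hence f: "feasible n m \<alpha> X p" by (simp add: S_def)
    have "p D \<le> 1" if "D \<in> ?\<Omega>" for D
      using member_le_sum[of D ?\<Omega> p] that feasible_nonneg[OF f] feasible_sum[OF f] by simp
    thus "p \<in> K" using feasible_nonneg[OF f] feasible_zero_outside[OF f]
      unfolding K_def by (auto simp: PiE_iff)
  qed
  ultimately show ?thesis by (simp add: S_def Int_absorb1 Int_absorb2)
qed

lemma continuous_on_entropy: "continuous_on {p. \<forall>D. 0 \<le> p D} (entropy n m)"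
proof -
  have "continuous_on {p. \<forall>D. 0 \<le> p D} (\<lambda>p::matrix \<Rightarrow> real. p D * ln (p D))" for D
  proof (rule continuous_on_compose2[OF continuous_on_mult_ln])
    show "continuous_on {p. \<forall>D. 0 \<le> p D} (\<lambda>p::matrix \<Rightarrow> real. p D)"
      using continuous_on_subset[of UNIV "\<lambda>p::matrix \<Rightarrow> real. p D"] by simp
  qed auto
  thus ?thesis unfolding entropy_def[abs_def] by (intro continuous_on_minus continuous_on_sum)
qed

definition is_maxent :: "nat \<Rightarrow> nat \<Rightarrow> (tile \<Rightarrow> real) \<Rightarrow> tile set \<Rightarrow> (matrix \<Rightarrow> real) \<Rightarrow> bool"
  where "is_maxent n m \<alpha> X p \<longleftrightarrow>
    feasible n m \<alpha> X p \<and> (\<forall>q. feasible n m \<alpha> X q \<longrightarrow> entropy n m q \<le> entropy n m p)"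

lemma maxent_exists:
  assumes "consistent n m \<alpha> X"
  shows "\<exists>p. is_maxent n m \<alpha> X p"
proof -
  have "continuous_on {p. feasible n m \<alpha> X p} (entropy n m)"
    by (rule continuous_on_subset[OF continuous_on_entropy]) (auto intro: feasible_nonneg)
  from continuous_attains_sup[OF compact_feasible _ this] assms show ?thesis
    unfolding is_maxent_def consistent_def by auto
qed

lemma is_maxent_support:
  assumes p: "is_maxent n m \<alpha> X p" and q: "feasible n m \<alpha> X q" and "0 < q D"
  shows "0 < p D"
proof (rule ccontr)
  assume "\<not> 0 < p D"
  have fp: "feasible n m \<alpha> X p" using p by (simp add: is_maxent_def)
  have D: "D \<in> datasets n m" using feasible_zero_outside[OF q, of D] \<open>0 < q D\<close> by auto
  have "p D = 0" using \<open>\<not> 0 < p D\<close> feasible_nonneg[OF fp, of D] by simp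
  have nn: "\<And>D. D \<in> datasets n m \<Longrightarrow> 0 \<le> p D" "\<And>D. D \<in> datasets n m \<Longrightarrow> 0 \<le> q D"
    using feasible_nonneg[OF fp] feasible_nonneg[OF q] by simp_all
  obtain t where t: "0 < t" "t < 1"
    and "entropy n m p < entropy n m (\<lambda>D. p D + t * (q D - p D))"
    using sum_mult_ln_mixture_lt[OF finite_datasets[of n m] nn feasible_sum[OF fp] feasible_sum[OF q] D
        \<open>p D = 0\<close> \<open>0 < q D\<close>]
    unfolding entropy_def by auto
  moreover have "feasible n m \<alpha> X (\<lambda>D. p D + t * (q D - p D))"
  proof (rule feasible_affine[OF fp q])
    fix D'
    have "0 \<le> (1 - t) * p D' + t * q D'"
      using feasible_nonneg[OF fp] feasible_nonneg[OF q] t by (intro add_nonneg_nonneg) simp_all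
    thus "0 \<le> p D' + t * (q D' - p D')" by (simp add: algebra_simps)
  qed
  ultimately show False using p unfolding is_maxent_def by (meson not_le)
qed

lemma is_maxent_cross_entropy:
  assumes p: "is_maxent n m \<alpha> X p" and q: "feasible n m \<alpha> X q"
  shows "(\<Sum>D\<in>datasets n m. q D * ln (p D)) = (\<Sum>D\<in>datasets n m. p D * ln (p D))"
proof -
  have fp: "feasible n m \<alpha> X p" using p by (simp add: is_maxent_def)
  have supp: "q D = 0" if "p D = 0" for D
    by (cases "0 < q D") (use is_maxent_support[OF p q, of D] feasible_nonneg[OF q, of D] that in auto)
  have "\<exists>e>0. \<forall>s. \<bar>s\<bar> < e \<longrightarrow> (\<forall>D\<in>datasets n m. 0 \<le> p D + s * (q D - p D))"
    by (rule affine_extension_nonneg) (simp_all add: feasible_nonneg[OF fp] supp)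
  then obtain e where e: "0 < e"
    and nn: "\<And>s D. \<bar>s\<bar> < e \<Longrightarrow> D \<in> datasets n m \<Longrightarrow> 0 \<le> p D + s * (q D - p D)"
    by blast
  have "(\<Sum>D\<in>datasets n m. p D * ln (p D))
      \<le> (\<Sum>D\<in>datasets n m. (p D + s * (q D - p D)) * ln (p D + s * (q D - p D)))"
    if "\<bar>s\<bar> < e" for s
  proof -
    have "entropy n m (\<lambda>D. p D + s * (q D - p D)) \<le> entropy n m p"
      using p feasible_affine[OF fp q nn[OF that]] unfolding is_maxent_def by blast
    thus ?thesis by (simp add: entropy_def)
  qed
  thus ?thesis
    by (intro cross_entropy_eq_at_entropy_max[where e = e])
       (simp_all add: e feasible_nonneg[OF fp] supp feasible_sum[OF fp] feasible_sum[OF q])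
qed

lemma is_maxent_unique:
  assumes p: "is_maxent n m \<alpha> X p" and q: "is_maxent n m \<alpha> X q"
  shows "p = q"
proof
  fix D
  have fp: "feasible n m \<alpha> X p" and fq: "feasible n m \<alpha> X q"
    using p q by (auto simp: is_maxent_def)
  show "p D = q D"
  proof (cases "D \<in> datasets n m")
    case True
    show ?thesis
      by (rule eq_if_cross_entropies_eq[OF finite_datasets[of n m] _ _ _ is_maxent_cross_entropy[OF p fq]
            is_maxent_cross_entropy[OF q fp] True])
         (use is_maxent_support[OF p fq] is_maxent_support[OF q fp] feasible_nonneg[OF fp]
            feasible_nonneg[OF fq] in blast)+
  qed (simp add: feasible_zero_outside[OF fp] feasible_zero_outside[OF fq])
qed

lemma is_maxent_maxent:
  assumes "consistent n m \<alpha> X"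
  shows "is_maxent n m \<alpha> X (maxent n m \<alpha> X)"
proof -
  have "\<exists>!p. is_maxent n m \<alpha> X p"
    using maxent_exists[OF assms] is_maxent_unique by blast
  from theI'[OF this] show ?thesis unfolding maxent_def is_maxent_def .
qed

definition maxent_entropy :: "nat \<Rightarrow> nat \<Rightarrow> (tile \<Rightarrow> real) \<Rightarrow> tile set \<Rightarrow> real"
  where "maxent_entropy n m \<alpha> X = entropy n m (maxent n m \<alpha> X)"

lemma maxent_entropy_antimono:
  assumes "consistent n m \<alpha> M" "Y \<subseteq> M"
  shows "maxent_entropy n m \<alpha> M \<le> maxent_entropy n m \<alpha> Y"
  using is_maxent_maxent[OF assms(1)] is_maxent_maxent[OF consistent_subset[OF assms(2,1)]]
    feasible_subset[OF assms(2)]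
  unfolding is_maxent_def maxent_entropy_def by blast

lemma KL_tiles_eq_maxent_entropy_diff:
  assumes "consistent n m \<alpha> M" "Y \<subseteq> M"
  shows "KL_tiles n m \<alpha> M Y = maxent_entropy n m \<alpha> Y - maxent_entropy n m \<alpha> M"
proof -
  define pM pY where "pM = maxent n m \<alpha> M" and "pY = maxent n m \<alpha> Y"
  have fM: "feasible n m \<alpha> Y pM"
    using is_maxent_maxent[OF assms(1)] feasible_subset[OF assms(2)]
    by (auto simp: is_maxent_def pM_def)
  have mY: "is_maxent n m \<alpha> Y pY"
    unfolding pY_def by (rule is_maxent_maxent[OF consistent_subset[OF assms(2,1)]])
  have "KL n m pM pY = (\<Sum>D\<in>datasets n m. pM D * ln (pM D) - pM D * ln (pY D))"
    unfolding KL_def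
  proof (rule sum.cong)
    fix D
    show "pM D * ln (pM D / pY D) = pM D * ln (pM D) - pM D * ln (pY D)"
    proof (cases "0 < pM D")
      case True
      thus ?thesis using is_maxent_support[OF mY fM True] by (simp add: ln_div algebra_simps)
    qed (use feasible_nonneg[OF fM, of D] in simp)
  qed simp
  also have "\<dots> = entropy n m pY - entropy n m pM"
    using is_maxent_cross_entropy[OF mY fM] by (simp add: entropy_def sum_subtractf)
  finally show ?thesis by (simp add: KL_tiles_def maxent_entropy_def pM_def pY_def)
qed

lemma dist_d_le:
  assumes "consistent n m \<alpha> (TS \<union> US \<union> BS)" and "1 \<le> k"
    and "maxent_entropy n m \<alpha> (US \<union> BS) + maxent_entropy n m \<alpha> (TS \<union> BS)
           - 2 * maxent_entropy n m \<alpha> (TS \<union> US \<union> BS)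
         \<le> k * (maxent_entropy n m \<alpha> BS - maxent_entropy n m \<alpha> (TS \<union> US \<union> BS))"
  shows "dist_d n m \<alpha> TS US BS \<le> k"
proof -
  let ?M = "TS \<union> US \<union> BS" and ?h = "maxent_entropy n m \<alpha>"
  have "dist_d n m \<alpha> TS US BS = (if ?h BS - ?h ?M = 0 then 1
      else (?h (US \<union> BS) - ?h ?M + (?h (TS \<union> BS) - ?h ?M)) / (?h BS - ?h ?M))"
    unfolding dist_d_def Let_def
    by (subst (1 2 3 4) KL_tiles_eq_maxent_entropy_diff[OF assms(1)]) auto
  moreover have "0 \<le> ?h BS - ?h ?M" using maxent_entropy_antimono[OF assms(1)] by auto
  ultimately show ?thesis using assms(2,3) by (simp add: divide_le_eq)
qed

definition zero_cells :: "(tile \<Rightarrow> real) \<Rightarrow> tile set \<Rightarrow> (nat \<times> nat) set"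
  where "zero_cells \<alpha> X = (\<Union>T\<in>{T\<in>X. \<alpha> T = 0}. area T)"

definition one_cells :: "(tile \<Rightarrow> real) \<Rightarrow> tile set \<Rightarrow> (nat \<times> nat) set"
  where "one_cells \<alpha> X = (\<Union>T\<in>{T\<in>X. \<alpha> T = 1}. area T)"

definition covered_cells :: "(tile \<Rightarrow> real) \<Rightarrow> tile set \<Rightarrow> (nat \<times> nat) set"
  where "covered_cells \<alpha> X = zero_cells \<alpha> X \<union> one_cells \<alpha> X"

definition compatible_datasets :: "nat \<Rightarrow> nat \<Rightarrow> (tile \<Rightarrow> real) \<Rightarrow> tile set \<Rightarrow> matrix set"
  where "compatible_datasets n m \<alpha> X =
    {D \<in> datasets n m. D \<inter> zero_cells \<alpha> X = {} \<and> one_cells \<alpha> X \<subseteq> D}"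

lemma covered_cells_Un: "covered_cells \<alpha> (X \<union> Y) = covered_cells \<alpha> X \<union> covered_cells \<alpha> Y"
  unfolding covered_cells_def zero_cells_def one_cells_def by auto

lemma tile_ok_area:
  assumes "tile_ok n m T"
  shows "finite (area T)" "area T \<noteq> {}" "area T \<subseteq> {1..n} \<times> {1..m}"
proof -
  have "finite (fst T)" "finite (snd T)"
    using assms finite_subset[of _ "{1..n}"] finite_subset[of _ "{1..m}"] by (auto simp: tile_ok_def)
  thus "finite (area T)" "area T \<noteq> {}" "area T \<subseteq> {1..n} \<times> {1..m}"
    using assms by (auto simp: area_def tile_ok_def)
qed

lemma fr_data_eq_card:
  assumes "tile_ok n m T"
  shows "fr_data T D = real (card (area T \<inter> D)) / real (card (area T))"
  unfolding fr_data_def using tile_ok_area[OF assms]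
  by (simp add: indicator_def sum.If_cases Int_def)

lemma
  assumes "tile_ok n m T"
  shows fr_data_eq_0_iff: "fr_data T D = 0 \<longleftrightarrow> area T \<inter> D = {}"
    and fr_data_eq_1_iff: "fr_data T D = 1 \<longleftrightarrow> area T \<subseteq> D"
    and fr_data_le_1: "fr_data T D \<le> 1"
proof -
  have fin: "finite (area T)" and pos: "0 < card (area T)"
    using tile_ok_area[OF assms] by (auto simp: card_gt_0_iff)
  have le: "card (area T \<inter> D) \<le> card (area T)" using fin by (intro card_mono) auto
  show "fr_data T D = 0 \<longleftrightarrow> area T \<inter> D = {}"
    unfolding fr_data_eq_card[OF assms] using fin pos by auto
  have "fr_data T D = 1 \<longleftrightarrow> card (area T \<inter> D) = card (area T)"
    unfolding fr_data_eq_card[OF assms] using pos by (auto simp: field_simps)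
  also have "\<dots> \<longleftrightarrow> area T \<inter> D = area T" using card_subset_eq[OF fin, of "area T \<inter> D"] by auto
  also have "\<dots> \<longleftrightarrow> area T \<subseteq> D" by blast
  finally show "fr_data T D = 1 \<longleftrightarrow> area T \<subseteq> D" .
  show "fr_data T D \<le> 1" unfolding fr_data_eq_card[OF assms] using le pos by simp
qed

lemma fr_data_nonneg: "0 \<le> fr_data T D"
  unfolding fr_data_def by (simp add: sum_nonneg)

lemma weighted_sum_eq_0_imp_eq_0:
  fixes w f :: "'a \<Rightarrow> real"
  assumes "finite A" "\<And>x. x \<in> A \<Longrightarrow> 0 \<le> w x" "\<And>x. x \<in> A \<Longrightarrow> 0 \<le> f x"
    and "(\<Sum>x\<in>A. w x * f x) = 0" "x \<in> A" "0 < w x"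
  shows "f x = 0"
  using assms by (subst (asm) sum_nonneg_eq_0_iff) auto

lemma feasible_support_compatible:
  assumes ok: "\<forall>T\<in>X. tile_ok n m T" and q: "feasible n m \<alpha> X q" and "0 < q D"
  shows "D \<in> compatible_datasets n m \<alpha> X"
proof -
  let ?\<Omega> = "datasets n m"
  have D: "D \<in> ?\<Omega>" using feasible_zero_outside[OF q, of D] \<open>0 < q D\<close> by auto
  have fr: "(\<Sum>D'\<in>?\<Omega>. q D' * fr_data T D') = \<alpha> T" if "T \<in> X" for T
    using q that by (simp add: feasible_def fr_dist_def)
  have "area T \<inter> D = {}" if T: "T \<in> X" "\<alpha> T = 0" for T
  proof -
    have "fr_data T D = 0"
      by (rule weighted_sum_eq_0_imp_eq_0[of ?\<Omega> q "fr_data T" D])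
         (simp_all add: feasible_nonneg[OF q] fr_data_nonneg fr[OF T(1)] T(2) D \<open>0 < q D\<close>)
    thus ?thesis using fr_data_eq_0_iff ok T by blast
  qed
  moreover have "area T \<subseteq> D" if T: "T \<in> X" "\<alpha> T = 1" for T
  proof -
    have okT: "tile_ok n m T" using ok T(1) ..
    have "(\<Sum>D'\<in>?\<Omega>. q D' * (1 - fr_data T D'))
        = (\<Sum>D'\<in>?\<Omega>. q D') - (\<Sum>D'\<in>?\<Omega>. q D' * fr_data T D')"
      by (simp add: right_diff_distrib sum_subtractf)
    also have "\<dots> = 0" using feasible_sum[OF q] fr[OF T(1)] T(2) by simp
    finally have sum0: "(\<Sum>D'\<in>?\<Omega>. q D' * (1 - fr_data T D')) = 0" .
    have "1 - fr_data T D = 0"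
      by (rule weighted_sum_eq_0_imp_eq_0[of ?\<Omega> q "\<lambda>D'. 1 - fr_data T D'" D])
         (simp_all add: feasible_nonneg[OF q] fr_data_le_1[OF okT] sum0 D \<open>0 < q D\<close>)
    thus ?thesis using fr_data_eq_1_iff[OF okT] by simp
  qed
  ultimately have "D \<inter> zero_cells \<alpha> X = {}" "one_cells \<alpha> X \<subseteq> D"
    unfolding zero_cells_def one_cells_def by blast+
  with D show ?thesis unfolding compatible_datasets_def by simp
qed

lemma card_compatible_datasets:
  assumes ok: "\<forall>T\<in>X. tile_ok n m T" and ne: "compatible_datasets n m \<alpha> X \<noteq> {}"
  shows "card (compatible_datasets n m \<alpha> X) = 2 ^ card ({1..n} \<times> {1..m} - covered_cells \<alpha> X)"
proof -
  let ?G = "{1..n} \<times> {1..m}" and ?Z = "zero_cells \<alpha> X" and ?O = "one_cells \<alpha> X"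
  have "?O \<subseteq> ?G" using ok tile_ok_area(3) unfolding one_cells_def by blast
  moreover have "?Z \<inter> ?O = {}" using ne unfolding compatible_datasets_def by blast
  \<comment> \<open>a compatible matrix is determined by its entries on the uncovered cells\<close>
  ultimately have "bij_betw (\<lambda>D. D - ?O) (compatible_datasets n m \<alpha> X) (Pow (?G - covered_cells \<alpha> X))"
    by (intro bij_betw_byWitness[where f' = "\<lambda>E. E \<union> ?O"])
       (auto simp: compatible_datasets_def datasets_def covered_cells_def)
  hence "card (compatible_datasets n m \<alpha> X) = card (Pow (?G - covered_cells \<alpha> X))"
    by (rule bij_betw_same_card)
  thus ?thesis by (simp add: card_Pow finite_subset)
qed

lemma fr_data_compatible:
  assumes "tile_ok n m T" "T \<in> X" "exact_tile \<alpha> T" "D \<in> compatible_datasets n m \<alpha> X"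
  shows "fr_data T D = \<alpha> T"
proof (cases "\<alpha> T = 0")
  case True
  hence "area T \<inter> D = {}"
    using assms(2,4) unfolding compatible_datasets_def zero_cells_def by blast
  thus ?thesis using True fr_data_eq_0_iff[OF assms(1)] by simp
next
  case False
  hence "\<alpha> T = 1" using assms(3) unfolding exact_tile_def by blast
  moreover from this have "area T \<subseteq> D"
    using assms(2,4) unfolding compatible_datasets_def one_cells_def by blast
  ultimately show ?thesis using fr_data_eq_1_iff[OF assms(1)] by simp
qed

lemma sum_indicator_const_mult:
  fixes f :: "'a \<Rightarrow> real"
  assumes "finite A" "C \<subseteq> A"
  shows "(\<Sum>x\<in>A. (if x \<in> C then c else 0) * f x) = c * (\<Sum>x\<in>C. f x)"
proof -
  have "(\<Sum>x\<in>A. (if x \<in> C then c else 0) * f x) = (\<Sum>x\<in>A. if x \<in> C then c * f x else 0)"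
    by (intro sum.cong) auto
  also have "\<dots> = (\<Sum>x\<in>C. c * f x)"
    using assms by (simp add: sum.inter_restrict[symmetric] Int_absorb1 Int_absorb2)
  finally show ?thesis by (simp add: sum_distrib_left)
qed

lemma feasible_uniform_compatible:
  assumes ok: "\<forall>T\<in>X. tile_ok n m T" and ex: "\<forall>T\<in>X. exact_tile \<alpha> T"
    and ne: "compatible_datasets n m \<alpha> X \<noteq> {}"
  shows "feasible n m \<alpha> X
    (\<lambda>D. if D \<in> compatible_datasets n m \<alpha> X then 1 / card (compatible_datasets n m \<alpha> X) else 0)"
proof -
  let ?\<Omega> = "datasets n m" and ?C = "compatible_datasets n m \<alpha> X"
  have C: "?C \<subseteq> ?\<Omega>" by (auto simp: compatible_datasets_def)
  have N: "0 < real (card ?C)" using ne finite_subset[OF C] by (simp add: card_gt_0_iff)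
  show ?thesis unfolding feasible_def is_dist_def
  proof (intro conjI ballI allI impI)
    show "(\<Sum>D\<in>?\<Omega>. if D \<in> ?C then 1 / card ?C else 0) = 1"
      using sum_indicator_const_mult[OF finite_datasets C, of "1 / card ?C" "\<lambda>_. 1"] N by simp
    fix T assume T: "T \<in> X"
    have "(\<Sum>D\<in>?C. fr_data T D) = (\<Sum>D\<in>?C. \<alpha> T)"
      using ok ex T by (intro sum.cong refl fr_data_compatible) auto
    hence "(\<Sum>D\<in>?C. fr_data T D) = card ?C * \<alpha> T" by simp
    thus "fr_dist n m T (\<lambda>D. if D \<in> ?C then 1 / card ?C else 0) = \<alpha> T"
      using sum_indicator_const_mult[OF finite_datasets C, of "1 / card ?C" "fr_data T"] N
      by (simp add: fr_dist_def)
  qed (use C in auto)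
qed

lemma maxent_entropy_exact:
  assumes ok: "\<forall>T\<in>X. tile_ok n m T" and ex: "\<forall>T\<in>X. exact_tile \<alpha> T"
    and "consistent n m \<alpha> X"
  shows "maxent_entropy n m \<alpha> X = card ({1..n} \<times> {1..m} - covered_cells \<alpha> X) * ln 2"
proof -
  let ?\<Omega> = "datasets n m" and ?C = "compatible_datasets n m \<alpha> X"
  have C: "?C \<subseteq> ?\<Omega>" by (auto simp: compatible_datasets_def)
  have q_out: "q D = 0" if "feasible n m \<alpha> X q" "D \<notin> ?C" for q D
    using feasible_support_compatible[OF ok that(1), of D] feasible_nonneg[OF that(1), of D] that
    by force
  have sum_C: "(\<Sum>D\<in>?\<Omega>. f D) = (\<Sum>D\<in>?C. f D)" if "\<And>D. D \<notin> ?C \<Longrightarrow> f D = 0" for f :: "_ \<Rightarrow> real"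
    by (rule sum.mono_neutral_right[OF finite_datasets C]) (simp add: that)
  obtain q0 where q0: "feasible n m \<alpha> X q0" using assms(3) by (auto simp: consistent_def)
  have ne: "?C \<noteq> {}"
  proof
    assume "?C = {}"
    thus False using feasible_sum[OF q0] q_out[OF q0] by simp
  qed
  define N where "N = real (card ?C)"
  have N: "0 < N" using ne finite_subset[OF C] by (simp add: N_def card_gt_0_iff)
  define u where "u D = (if D \<in> ?C then 1 / N else 0)" for D
  have fu: "feasible n m \<alpha> X u"
    unfolding u_def N_def by (rule feasible_uniform_compatible[OF ok ex ne])
  have H_u: "entropy n m u = ln N"
    using sum_indicator_const_mult[OF finite_datasets C, of "1 / N" "\<lambda>D. ln (u D)"] N
    by (simp add: entropy_def u_def N_def ln_div)
  \<comment> \<open>every feasible distribution lives on the compatible matrices\<close>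
  have H_le: "entropy n m q \<le> ln N" if q: "feasible n m \<alpha> X q" for q
  proof -
    have "entropy n m q = - (\<Sum>D\<in>?C. q D * ln (q D))"
      unfolding entropy_def by (subst sum_C) (simp_all add: q_out[OF q])
    also have "\<dots> \<le> ln N" unfolding N_def
      using finite_subset[OF C] ne feasible_nonneg[OF q] feasible_sum[OF q] sum_C[of q, OF q_out[OF q]]
      by (intro neg_sum_mult_ln_le_ln_card) auto
    finally show ?thesis .
  qed
  have "entropy n m (maxent n m \<alpha> X) = ln N"
  proof (rule order_antisym)
    show "entropy n m (maxent n m \<alpha> X) \<le> ln N"
      using is_maxent_maxent[OF assms(3)] H_le unfolding is_maxent_def by blast
    show "ln N \<le> entropy n m (maxent n m \<alpha> X)"
      using is_maxent_maxent[OF assms(3)] fu unfolding is_maxent_def H_u[symmetric] by blast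
  qed
  thus ?thesis
    using card_compatible_datasets[OF ok ne] by (simp add: maxent_entropy_def N_def ln_realpow)
qed

lemma card_Diff_Un_supermodular:
  assumes "finite G"
  shows "card (G - (A \<union> C)) + card (G - (B \<union> C)) \<le> card (G - C) + card (G - (A \<union> B \<union> C))"
proof -
  have "card (G - (A \<union> C)) + card (G - (B \<union> C))
      = card ((G - (A \<union> C)) \<union> (G - (B \<union> C))) + card ((G - (A \<union> C)) \<inter> (G - (B \<union> C)))"
    using assms by (intro card_Un_Int) auto
  moreover have "card ((G - (A \<union> C)) \<union> (G - (B \<union> C))) \<le> card (G - C)"
    using assms by (intro card_mono) auto
  moreover have "(G - (A \<union> C)) \<inter> (G - (B \<union> C)) = G - (A \<union> B \<union> C)" by auto
  ultimately show ?thesis by simp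
qed

lemma maxent_entropy_exact_supermodular:
  assumes ok: "\<forall>T\<in>TS \<union> US \<union> BS. tile_ok n m T" and ex: "\<forall>T\<in>TS \<union> US \<union> BS. exact_tile \<alpha> T"
    and cons: "consistent n m \<alpha> (TS \<union> US \<union> BS)"
  shows "maxent_entropy n m \<alpha> (US \<union> BS) + maxent_entropy n m \<alpha> (TS \<union> BS)
    \<le> maxent_entropy n m \<alpha> BS + maxent_entropy n m \<alpha> (TS \<union> US \<union> BS)"
proof -
  let ?M = "TS \<union> US \<union> BS" and ?h = "maxent_entropy n m \<alpha>"
  let ?c = "\<lambda>Y. real (card ({1..n} \<times> {1..m} - covered_cells \<alpha> Y))"
  have h: "?h Y = ?c Y * ln 2" if "Y \<subseteq> ?M" for Y
    using maxent_entropy_exact ok ex consistent_subset[OF that cons] that by blast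
  have "?c (US \<union> BS) + ?c (TS \<union> BS) \<le> ?c BS + ?c ?M"
    using card_Diff_Un_supermodular[of "{1..n} \<times> {1..m}" "covered_cells \<alpha> US"
        "covered_cells \<alpha> BS" "covered_cells \<alpha> TS"]
    by (simp add: covered_cells_Un Un_ac)
  hence "(?c (US \<union> BS) + ?c (TS \<union> BS)) * ln 2 \<le> (?c BS + ?c ?M) * ln 2"
    by (intro mult_right_mono) auto
  moreover have "?h (US \<union> BS) = ?c (US \<union> BS) * ln 2" "?h (TS \<union> BS) = ?c (TS \<union> BS) * ln 2"
    "?h BS = ?c BS * ln 2" "?h ?M = ?c ?M * ln 2"
    by (rule h; blast)+
  ultimately show ?thesis by (simp add: distrib_right)
qed

theorem theorem6:
  fixes n m :: nat and \<alpha> :: "tile \<Rightarrow> real" and TS US BS :: "tile set"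
  assumes "1 \<le> n" and "1 \<le> m"
    and "\<forall>T\<in>TS \<union> US \<union> BS. tile_ok n m T"
    and "consistent n m \<alpha> (TS \<union> US \<union> BS)"
  shows "dist_d n m \<alpha> TS US BS \<le> 2 \<and>
         ((\<forall>T\<in>TS \<union> US \<union> BS. exact_tile \<alpha> T) \<longrightarrow> dist_d n m \<alpha> TS US BS \<le> 1)"
proof
  let ?h = "maxent_entropy n m \<alpha>"
  have "?h (TS \<union> US \<union> BS) \<le> ?h (US \<union> BS)"
    by (rule maxent_entropy_antimono[OF assms(4)]) blast
  moreover have "?h (US \<union> BS) \<le> ?h BS" "?h (TS \<union> BS) \<le> ?h BS"
    by (rule maxent_entropy_antimono[OF consistent_subset[OF _ assms(4)]]; blast)+
  ultimately show "dist_d n m \<alpha> TS US BS \<le> 2" by (intro dist_d_le[OF assms(4)]) auto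
  show "(\<forall>T\<in>TS \<union> US \<union> BS. exact_tile \<alpha> T) \<longrightarrow> dist_d n m \<alpha> TS US BS \<le> 1"
    using maxent_entropy_exact_supermodular[OF assms(3) _ assms(4)]
    by (intro impI dist_d_le[OF assms(4)]) auto
qed

end
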